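(* There exist absolute constants $c\in(0,1)$, $C>0$, $c'>0$ and $m_0$ such that for every integer $m\ge m_0$, with $X=[m]=\{1,\dots,m\}$ and considering distributions $\mathrm{Unif}(X')$ for nonempty $X'\subseteq X$: (1) Let $n_{\mathrm{small}}=\lceil C\sqrt m\rceil$. For every integer $1\le k\le m$ there is $f:X^{n_{\mathrm{small}}}\to\{0,1\}$ such that: if $|X'|\ge k$, then for every $\mathcal D'\in\mathrm{sub}(\mathrm{Unif}(X'))$, $\Pr_{S\sim(\mathcal D')^{n_{\mathrm{small}}}}[f(S)=1]\ge0.99$; and if $|X'|\le ck$, then for every $\mathcal D'\in\mathrm{sub}(\mathrm{Unif}(X'))$, $\Pr_{S\sim(\mathcal D')^{n_{\mathrm{small}}}}[f(S)=1]\le0.01$. (2) Let $N=\lfloor c'm\rfloor$ and $k=m$. For every $f:X^N\to\{0,1\}$, either there is $X'$ with $|X'|=m$ such that $\mathbb E_{S\sim\mathrm{Unif}(X')^{2N}}\big[\min_{S'\in\mathrm{sub}(S)}f(S')\big]\le0.51$, or there is $X'$ with $|X'|\le cm$ such that $\mathbb E_{S\sim\mathrm{Unif}(X')^{2N}}\big[\max_{S'\in\mathrm{sub}(S)}f(S')\big]\ge0.49$. (Thus no $f$ using $N=\Theta(m)$ samples achieves under adaptive subtractive contamination the distinguishing guarantee that $O(\sqrt m)$ samples achieve under oblivious subtractive contamination.)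
   Context: For a distribution $\mathcal D$, $\mathrm{sub}(\mathcal D)$ is the set of distributions obtained as the law of $x\sim\mathcal D$ conditioned on some event of probability (at least) $1/2$ (oblivious $1/2$-subtractive contamination). For a sample $S\in X^{2N}$, $\mathrm{sub}(S)$ is the set of samples $S'\in X^N$ with $S'_j=S_{i_j}$ for some $N$ distinct indices $i_1,\dots,i_N\in[2N]$ (adaptive $1/2$-subtractive contamination: the adversary sees $S$ and removes half of it). *)

theory Defs
  imports "HOL-Probability.Probability"
begin

fun iid_pmf :: "nat \<Rightarrow> 'a pmf \<Rightarrow> 'a list pmf" where
  "iid_pmf 0 p = return_pmf []"
| "iid_pmf (Suc n) p = bind_pmf p (\<lambda>x. map_pmf (\<lambda>xs. x # xs) (iid_pmf n p))"

text \<open>Oblivious 1/2-subtractive contamination: laws of x ~ D conditioned on an event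
  (possibly involving extra randomness) of probability at least 1/2, i.e. exactly the
  distributions D' with D' \<le> 2 D pointwise.\<close>
definition sub_dist :: "'a pmf \<Rightarrow> 'a pmf set" where
  "sub_dist D = {D'. \<forall>x. pmf D' x \<le> 2 * pmf D x}"

text \<open>Adaptive 1/2-subtractive contamination of a sample S of length 2N: subsamples
  of size N given by N distinct indices.\<close>
definition sub_sample :: "nat \<Rightarrow> 'a list \<Rightarrow> 'a list set" where
  "sub_sample N S = {map (\<lambda>i. S ! i) is | is. length is = N \<and> distinct is \<and> set is \<subseteq> {..<2*N}}"

end

theory Submission
  imports Defs "HOL-Combinatorics.Permutations"
begin

text \<open>
  Oblivious contamination leaves every point with probability at most \<open>2 / |X'|\<close>, so a collision
  test on the first \<open>3 a \<approx> (3/50) \<surd>k\<close> samples works: if \<open>|X'| \<ge> k\<close> the birthday bound makes a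
  collision unlikely, while if \<open>|X'| \<le> c k\<close> a Cauchy--Schwarz argument shows that, once more than
  \<open>d |X'|\<close> points have been drawn, every two further draws multiply the collision-free probability
  by \<open>1 - d\<close>.

  The adversary keeps the
  first \<open>N\<close> distinct values of the \<open>2 N\<close> samples.  Under the uniform law on \<open>[m]\<close>, and under the
  uniform law on a uniformly random subset of size \<open>c m\<close>, there are at least \<open>N\<close> distinct values
  except with probability \<open>0.01\<close> (Markov's inequality for the number of repeats), and by
  permutation invariance the kept list is then uniformly distributed over the distinct \<open>N\<close>-lists.
  So \<open>f\<close> sees the same input in both situations, and averaging over the random subset produces a
  fixed small support \<open>X'\<close>.
\<close>

section \<open>I.i.d. samples\<close>

lemma set_pmf_iid_pmf: "set_pmf (iid_pmf n p) \<subseteq> {xs. set xs \<subseteq> set_pmf p \<and> length xs = n}"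
  by (induction n) fastforce+

lemma finite_set_pmf_iid_pmf: "finite (set_pmf p) \<Longrightarrow> finite (set_pmf (iid_pmf n p))"
  by (rule finite_subset[OF set_pmf_iid_pmf]) (simp add: finite_lists_length_eq)

lemma finite_set_pmf_iid_pmf_of_set:
  "finite A \<Longrightarrow> A \<noteq> {} \<Longrightarrow> finite (set_pmf (iid_pmf n (pmf_of_set A)))"
  by (rule finite_set_pmf_iid_pmf) simp

lemma map_pmf_map_iid_pmf: "map_pmf (map g) (iid_pmf n p) = iid_pmf n (map_pmf g p)"
proof (induction n)
  case (Suc n)
  have "map_pmf (map g) (iid_pmf (Suc n) p)
      = p \<bind> (\<lambda>x. map_pmf ((#) (g x)) (map_pmf (map g) (iid_pmf n p)))"
    by (simp add: map_bind_pmf map_pmf_comp)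
  then show ?case by (simp add: Suc bind_map_pmf)
qed simp

lemma map_pmf_take_iid_pmf: "L \<le> n \<Longrightarrow> map_pmf (take L) (iid_pmf n p) = iid_pmf L p"
proof (induction L arbitrary: n)
  case 0
  then show ?case by (simp add: map_pmf_const)
next
  case (Suc L)
  then obtain n' where n: "n = Suc n'" "L \<le> n'" by (cases n) auto
  have "map_pmf (take (Suc L)) (iid_pmf n p)
      = p \<bind> (\<lambda>x. map_pmf ((#) x) (map_pmf (take L) (iid_pmf n' p)))"
    by (simp add: n map_bind_pmf map_pmf_comp)
  then show ?case by (simp add: Suc.IH[OF n(2)])
qed

lemma measure_bind_pmf_finite:
  assumes "finite A" "set_pmf p \<subseteq> A" "\<And>x. x \<in> A \<Longrightarrow> finite (set_pmf (f x))"
  shows "measure_pmf.prob (p \<bind> f) B = (\<Sum>a\<in>A. pmf p a * measure_pmf.prob (f a) B)"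
proof -
  have "measure_pmf.prob (p \<bind> f) B = measure_pmf.expectation (p \<bind> f) (indicator B)"
    by simp
  also have "\<dots> = (\<Sum>a\<in>A. pmf p a *\<^sub>R measure_pmf.expectation (f a) (indicator B))"
    by (rule pmf_expectation_bind[OF assms(1,3,2)])
  finally show ?thesis by simp
qed

lemma map_pmf_iid_pmf_of_set_permutes:
  assumes "\<pi> permutes A" "finite A" "A \<noteq> {}"
  shows "map_pmf (map \<pi>) (iid_pmf n (pmf_of_set A)) = iid_pmf n (pmf_of_set A)"
proof -
  have "map_pmf \<pi> (pmf_of_set A) = pmf_of_set (\<pi> ` A)"
    using assms permutes_inj_on by (intro map_pmf_of_set_inj) auto
  then show ?thesis
    by (simp add: map_pmf_map_iid_pmf permutes_image[OF assms(1)])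
qed

section \<open>Collision probabilities\<close>

fun fresh_prob :: "'a set \<Rightarrow> ('a \<Rightarrow> real) \<Rightarrow> 'a set \<Rightarrow> nat \<Rightarrow> real" where
  "fresh_prob U p A 0 = 1"
| "fresh_prob U p A (Suc n) = (\<Sum>y\<in>U - A. p y * fresh_prob U p (insert y A) n)"

lemma prob_iid_pmf_distinct_avoiding:
  assumes "finite U" "set_pmf D \<subseteq> U"
  shows "measure_pmf.prob (iid_pmf n D) {xs. distinct xs \<and> set xs \<inter> A = {}}
       = fresh_prob U (pmf D) A n"
proof (induction n arbitrary: A)
  case (Suc n)
  let ?E = "\<lambda>A. {xs. distinct xs \<and> set xs \<inter> A = {}}"
  have fin: "\<And>x. finite (set_pmf (map_pmf ((#) x) (iid_pmf n D)))"
    using finite_set_pmf_iid_pmf[OF finite_subset[OF assms(2,1)]] by simp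
  have "measure_pmf.prob (iid_pmf (Suc n) D) (?E A)
     = (\<Sum>a\<in>U. pmf D a * measure_pmf.prob (map_pmf ((#) a) (iid_pmf n D)) (?E A))"
    by (simp only: iid_pmf.simps) (rule measure_bind_pmf_finite[OF assms fin])
  also have "\<dots> = (\<Sum>a\<in>U. if a \<in> A then 0 else pmf D a * fresh_prob U (pmf D) (insert a A) n)"
  proof (rule sum.cong[OF refl])
    fix a
    show "pmf D a * measure_pmf.prob (map_pmf ((#) a) (iid_pmf n D)) (?E A)
      = (if a \<in> A then 0 else pmf D a * fresh_prob U (pmf D) (insert a A) n)"
    proof (cases "a \<in> A")
      case True
      then have "(#) a -` ?E A = {}" by auto
      then show ?thesis using True by simp
    next
      case False
      then have "(#) a -` ?E A = ?E (insert a A)" by auto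
      then show ?thesis using False Suc.IH[of "insert a A"] by simp
    qed
  qed
  also have "\<dots> = fresh_prob U (pmf D) A (Suc n)"
    using assms(1) by (simp add: sum.If_cases Diff_eq)
  finally show ?case .
qed simp

context
  fixes U :: "'a set" and p :: "'a \<Rightarrow> real"
  assumes finite_U: "finite U" and p_nonneg: "\<And>y. 0 \<le> p y"
begin

lemma fresh_prob_nonneg: "0 \<le> fresh_prob U p A n"
  by (induction n arbitrary: A) (auto intro!: sum_nonneg mult_nonneg_nonneg p_nonneg)

lemma fresh_prob_antimono: "B \<subseteq> A \<Longrightarrow> fresh_prob U p A n \<le> fresh_prob U p B n"
proof (induction n arbitrary: A B)
  case (Suc n)
  have "fresh_prob U p A (Suc n) \<le> (\<Sum>y\<in>U - A. p y * fresh_prob U p (insert y B) n)"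
    using Suc by (auto intro!: sum_mono mult_left_mono p_nonneg Suc.IH insert_mono)
  also have "\<dots> \<le> (\<Sum>y\<in>U - B. p y * fresh_prob U p (insert y B) n)"
    using Suc.prems finite_U
    by (intro sum_mono2) (auto intro!: mult_nonneg_nonneg p_nonneg fresh_prob_nonneg)
  finally show ?case by simp
qed simp

lemma fresh_prob_le_1: "sum p U \<le> 1 \<Longrightarrow> fresh_prob U p A n \<le> 1"
proof (induction n arbitrary: A)
  case (Suc n)
  have "fresh_prob U p A (Suc n) \<le> (\<Sum>y\<in>U - A. p y)"
    using Suc by (auto intro!: sum_mono mult_left_le p_nonneg)
  also have "\<dots> \<le> sum p U" using finite_U by (intro sum_mono2) (auto intro: p_nonneg)
  finally show ?case using Suc.prems by simp
qed simp

lemma fresh_prob_Suc_le: "sum p U \<le> 1 \<Longrightarrow> fresh_prob U p A (Suc n) \<le> fresh_prob U p A n"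
proof (induction n arbitrary: A)
  case 0
  have "(\<Sum>y\<in>U - A. p y) \<le> sum p U" using finite_U by (intro sum_mono2) (auto intro: p_nonneg)
  then show ?case using 0 by simp
next
  case (Suc n)
  have "fresh_prob U p A (Suc (Suc n)) = (\<Sum>y\<in>U - A. p y * fresh_prob U p (insert y A) (Suc n))"
    by (rule fresh_prob.simps(2))
  also have "\<dots> \<le> (\<Sum>y\<in>U - A. p y * fresh_prob U p (insert y A) n)"
    by (intro sum_mono mult_left_mono p_nonneg Suc.IH Suc.prems)
  also have "\<dots> = fresh_prob U p A (Suc n)" by (rule fresh_prob.simps(2)[symmetric])
  finally show ?case .
qed

text \<open>Split according to whether \<open>x\<close> occurs among the \<open>n + 1\<close> distinct draws, and if so at which
  of the \<open>n + 1\<close> positions.\<close>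

lemma fresh_prob_Suc_insert:
  assumes "x \<in> U - A"
  shows "fresh_prob U p A (Suc n)
       = fresh_prob U p (insert x A) (Suc n) + real (Suc n) * p x * fresh_prob U p (insert x A) n"
  using assms
proof (induction n arbitrary: A)
  case 0
  have "(\<Sum>y\<in>U - A. p y) = p x + (\<Sum>y\<in>U - A - {x}. p y)"
    by (rule sum.remove) (use finite_U 0 in auto)
  then show ?case by (simp add: Diff_insert[symmetric])
next
  case (Suc n)
  let ?R = "fresh_prob U p"
  have "?R A (Suc (Suc n)) = (\<Sum>y\<in>U - A. p y * ?R (insert y A) (Suc n))"
    by (rule fresh_prob.simps(2))
  also have "\<dots> = p x * ?R (insert x A) (Suc n)
        + (\<Sum>y\<in>U - A - {x}. p y * ?R (insert y A) (Suc n))"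
    by (rule sum.remove) (use finite_U Suc.prems in auto)
  also have "U - A - {x} = U - insert x A" by auto
  also have "(\<Sum>y\<in>U - insert x A. p y * ?R (insert y A) (Suc n))
    = (\<Sum>y\<in>U - insert x A. p y * ?R (insert y (insert x A)) (Suc n)
        + real (Suc n) * p x * (p y * ?R (insert y (insert x A)) n))"
  proof (rule sum.cong[OF refl])
    fix y assume "y \<in> U - insert x A"
    then have "x \<in> U - insert y A" using Suc.prems by auto
    from Suc.IH[OF this] show "p y * ?R (insert y A) (Suc n)
      = p y * ?R (insert y (insert x A)) (Suc n) + real (Suc n) * p x * (p y * ?R (insert y (insert x A)) n)"
      by (simp only: insert_commute[of x y]) (simp add: algebra_simps)
  qed
  also have "\<dots> = ?R (insert x A) (Suc (Suc n)) + real (Suc n) * p x * ?R (insert x A) (Suc n)"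
    by (simp only: fresh_prob.simps(2) sum.distrib sum_distrib_left mult_ac)
  finally show ?case by (simp add: algebra_simps del: fresh_prob.simps)
qed

end

lemma le_one_minus_mult_of_quadratic_deficit:
  fixes d x y z e :: real
  assumes "0 \<le> d" "d \<le> 1/2" "0 \<le> y" "y \<le> x" "0 \<le> e" "d * y\<^sup>2 \<le> e * x" "z \<le> y - e"
  shows "z \<le> (1 - d) * x"
proof (cases "x = 0")
  case True
  then show ?thesis using assms by simp
next
  case False
  then have "0 < x" using assms by simp
  have "0 \<le> (x - y) * ((1 - d) * x - d * y)"
    using assms by (intro mult_nonneg_nonneg) (auto intro: mult_mono)
  then have "z * x \<le> (1 - d) * x * x"
    using assms \<open>0 < x\<close> mult_right_mono[OF assms(7), of x]
    by (simp add: power2_eq_square algebra_simps)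
  then show ?thesis using \<open>0 < x\<close> by simp
qed

context
  fixes U :: "'a set" and p :: "'a \<Rightarrow> real"
  assumes finite_U: "finite U" and p_nonneg: "\<And>y. 0 \<le> p y" and sum_p: "sum p U = 1"
begin

abbreviation collision_free :: "nat \<Rightarrow> real" where
  "collision_free n \<equiv> fresh_prob U p {} n"

lemma collision_free_Suc_eq:
  assumes "x \<in> U"
  shows "collision_free (Suc n) = fresh_prob U p {x} (Suc n) + real (Suc n) * p x * fresh_prob U p {x} n"
  using fresh_prob_Suc_insert[OF finite_U p_nonneg, where x = x and A = "{}" and n = n] assms by simp

lemma collision_free_Suc_ge:
  assumes "\<And>x. x \<in> U \<Longrightarrow> p x \<le> M"
  shows "collision_free n - real n * M \<le> collision_free (Suc n)"
proof (cases n)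
  case 0
  then show ?thesis using sum_p by simp
next
  case (Suc n')
  have "collision_free n - real n * M = (\<Sum>x\<in>U. p x * (collision_free n - real n * M))"
    using sum_p by (simp add: sum_distrib_right[symmetric])
  also have "\<dots> \<le> (\<Sum>x\<in>U. p x * fresh_prob U p {x} n)"
  proof (intro sum_mono mult_left_mono p_nonneg)
    fix x assume x: "x \<in> U"
    have "fresh_prob U p {x} n' \<le> 1"
      using fresh_prob_le_1[OF finite_U p_nonneg, where A = "{x}" and n = n'] sum_p by simp
    then have "p x * fresh_prob U p {x} n' \<le> M"
      using assms[OF x] mult_left_le[OF _ p_nonneg] by (meson order_trans)
    then have "real n * (p x * fresh_prob U p {x} n') \<le> real n * M" by (simp add: mult_left_mono)
    then show "collision_free n - real n * M \<le> fresh_prob U p {x} n"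
      using collision_free_Suc_eq[OF x, of n'] Suc by (simp add: algebra_simps)
  qed
  finally show ?thesis by simp
qed

lemma collision_free_ge:
  assumes "\<And>x. x \<in> U \<Longrightarrow> p x \<le> M" "0 \<le> M"
  shows "1 - M * real n ^ 2 \<le> collision_free n"
proof (induction n)
  case (Suc n)
  have "1 - M * real (Suc n) ^ 2 \<le> 1 - M * real n ^ 2 - real n * M"
    using assms(2) by (simp add: power2_eq_square algebra_simps)
  then show ?case using Suc collision_free_Suc_ge[OF assms(1), of n] by linarith
qed simp

text \<open>With \<open>T = \<Sum>x. p x\<^sup>2 R x\<close> and \<open>R x = fresh_prob U p {x} n\<close>, two more draws satisfy
  \<open>collision_free (n + 2) = collision_free (n + 1) - (n + 1) T\<close>, while Cauchy--Schwarz gives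
  \<open>collision_free (n + 1)\<^sup>2 \<le> T \<Sum>x. R x \<le> T |U| collision_free n\<close>.  So once \<open>n + 1 \<ge> d |U|\<close>,
  every second draw removes a fraction \<open>d\<close> of the collision-free probability.\<close>

lemma collision_free_Suc_Suc_le:
  assumes "0 \<le> d" "d \<le> 1/2" "d * real (card U) \<le> real (Suc n)"
  shows "collision_free (Suc (Suc n)) \<le> (1 - d) * collision_free n"
proof -
  define R where "R x = fresh_prob U p {x} n" for x
  define T where "T = (\<Sum>x\<in>U. (p x)\<^sup>2 * R x)"
  have R_nonneg: "0 \<le> R x" for x unfolding R_def by (rule fresh_prob_nonneg[OF finite_U p_nonneg])
  have T_nonneg: "0 \<le> T" unfolding T_def using R_nonneg by (auto intro!: sum_nonneg)
  have nonneg: "0 \<le> collision_free k" for k by (rule fresh_prob_nonneg[OF finite_U p_nonneg])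
  have decr: "collision_free (Suc n) \<le> collision_free n"
    using fresh_prob_Suc_le[OF finite_U p_nonneg, where A = "{}" and n = n] sum_p by simp
  have two_draws: "collision_free (Suc (Suc n)) = collision_free (Suc n) - real (Suc n) * T"
  proof -
    have "collision_free (Suc (Suc n)) = (\<Sum>x\<in>U. p x * collision_free (Suc n) - real (Suc n) * ((p x)\<^sup>2 * R x))"
      unfolding fresh_prob.simps(2)[of U p "{}"] Diff_empty
      using collision_free_Suc_eq[of _ n]
      by (intro sum.cong) (simp_all add: R_def power2_eq_square algebra_simps)
    then show ?thesis
      by (simp add: sum_subtractf sum_distrib_right[symmetric] sum_distrib_left[symmetric] sum_p T_def)
  qed
  have "(collision_free (Suc n))\<^sup>2 = (\<Sum>x\<in>U. (p x * sqrt (R x)) * sqrt (R x))\<^sup>2"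
    using R_nonneg by (simp add: R_def mult.assoc)
  also have "\<dots> \<le> (\<Sum>x\<in>U. (p x * sqrt (R x))\<^sup>2) * (\<Sum>x\<in>U. (sqrt (R x))\<^sup>2)"
    by (rule Cauchy_Schwarz_ineq_sum)
  also have "\<dots> = T * (\<Sum>x\<in>U. R x)"
    using R_nonneg by (simp add: T_def power_mult_distrib)
  also have "\<dots> \<le> T * (real (card U) * collision_free n)"
    using T_nonneg sum_mono[of U R "\<lambda>_. collision_free n"]
    unfolding R_def by (simp add: mult_left_mono fresh_prob_antimono[OF finite_U p_nonneg, where B = "{}"])
  finally have "d * (collision_free (Suc n))\<^sup>2 \<le> (d * real (card U)) * (T * collision_free n)"
    using assms(1) by (metis mult_left_mono mult.assoc mult.left_commute)
  also have "\<dots> \<le> (real (Suc n) * T) * collision_free n"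
    using assms(3) T_nonneg nonneg[of n] by (metis mult_right_mono mult.assoc mult_nonneg_nonneg)
  finally have deficit: "d * (collision_free (Suc n))\<^sup>2 \<le> (real (Suc n) * T) * collision_free n" .
  show ?thesis
    by (rule le_one_minus_mult_of_quadratic_deficit[OF assms(1,2) nonneg decr _ deficit])
       (use T_nonneg two_draws in simp_all)
qed

lemma collision_free_geometric_decay:
  assumes "0 \<le> d" "d \<le> 1/2" "d * real (card U) \<le> real (Suc a)"
  shows "collision_free (a + 2 * j) \<le> (1 - d) ^ j"
proof (induction j)
  case 0
  show ?case using fresh_prob_le_1[OF finite_U p_nonneg, where A = "{}" and n = a] sum_p by simp
next
  case (Suc j)
  have "collision_free (a + 2 * Suc j) \<le> (1 - d) * collision_free (a + 2 * j)"
    using collision_free_Suc_Suc_le[of d "a + 2 * j"] assms by simp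
  also have "\<dots> \<le> (1 - d) * (1 - d) ^ j" using Suc assms by (intro mult_left_mono) auto
  finally show ?case by simp
qed

end

section \<open>Testing support size under oblivious contamination\<close>

lemma sub_dist_pmf_of_set:
  assumes "finite X" "X \<noteq> {}" "D \<in> sub_dist (pmf_of_set X)"
  shows "set_pmf D \<subseteq> X" "pmf D x \<le> 2 / real (card X)"
proof -
  have le: "pmf D y \<le> 2 * (indicator X y / real (card X))" for y
    using assms by (simp add: sub_dist_def)
  show "set_pmf D \<subseteq> X"
  proof
    fix y assume "y \<in> set_pmf D"
    then show "y \<in> X" using le[of y] by (cases "y \<in> X") (auto simp: set_pmf_eq')
  qed
  show "pmf D x \<le> 2 / real (card X)"
    using le[of x] by (cases "x \<in> X") auto
qed

lemma prob_distinct_take_iid_pmf: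
  assumes "finite U" "set_pmf D \<subseteq> U" "L \<le> n"
  shows "measure_pmf.prob (iid_pmf n D) {S. distinct (take L S)} = fresh_prob U (pmf D) {} L"
proof -
  have "measure_pmf.prob (iid_pmf n D) {S. distinct (take L S)}
      = measure_pmf.prob (map_pmf (take L) (iid_pmf n D)) {xs. distinct xs \<and> set xs \<inter> {} = {}}"
    by (simp add: vimage_def)
  also have "\<dots> = fresh_prob U (pmf D) {} L"
    by (simp only: map_pmf_take_iid_pmf[OF assms(3)] prob_iid_pmf_distinct_avoiding[OF assms(1,2)])
  finally show ?thesis .
qed

lemma prob_distinct_take_sub_dist_ge:
  assumes "finite X" "X \<noteq> {}" "D \<in> sub_dist (pmf_of_set X)" "L \<le> n"
  shows "1 - 2 * real L ^ 2 / real (card X) \<le> measure_pmf.prob (iid_pmf n D) {S. distinct (take L S)}"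
  using collision_free_ge[OF assms(1), of "pmf D" "2 / real (card X)" L]
    sub_dist_pmf_of_set[OF assms(1-3)] sum_pmf_eq_1[OF assms(1)]
  by (simp add: prob_distinct_take_iid_pmf[OF assms(1) _ assms(4)])

lemma prob_distinct_take_sub_dist_le:
  assumes "finite X" "X \<noteq> {}" "D \<in> sub_dist (pmf_of_set X)" "3 * a \<le> n"
    and "0 \<le> d" "d \<le> 1/2" "d * real (card X) \<le> real (Suc a)"
  shows "measure_pmf.prob (iid_pmf n D) {S. distinct (take (3 * a) S)} \<le> (1 - d) ^ a"
  using collision_free_geometric_decay[OF assms(1), of "pmf D" d a a] assms(5-7)
    sub_dist_pmf_of_set[OF assms(1-3)] sum_pmf_eq_1[OF assms(1)]
  by (simp add: prob_distinct_take_iid_pmf[OF assms(1) _ assms(4)])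

lemma one_minus_power_mult_le_1:
  fixes d :: real
  assumes "0 \<le> d" "d \<le> 1"
  shows "(1 - d) ^ a * (1 + real a * d) \<le> 1"
proof -
  have "(1 - d) ^ a * (1 + real a * d) \<le> (1 - d) ^ a * (1 + d) ^ a"
    using assms Bernoulli_inequality[of d a] by (intro mult_left_mono) auto
  also have "\<dots> = (1 - d\<^sup>2) ^ a"
    by (simp add: power_mult_distrib[symmetric] power2_eq_square algebra_simps)
  also have "\<dots> \<le> 1" using assms by (intro power_le_one) (auto simp: power_le_one)
  finally show ?thesis .
qed

lemma prob_distinct_take_large_support:
  assumes "finite X" "X \<noteq> {}" "D \<in> sub_dist (pmf_of_set X)" "3 * a \<le> n"
    and "1 \<le> k" "real k \<le> real (card X)" "real a \<le> sqrt (real k) / 50"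
  shows "0.99 \<le> measure_pmf.prob (iid_pmf n D) {S. distinct (take (3 * a) S)}"
proof -
  have "real (3 * a) ^ 2 \<le> 9 * (sqrt (real k) / 50)\<^sup>2"
    using assms(7) by (simp add: power_mult_distrib power_mono)
  also have "\<dots> = 9 * real k / 2500" by (simp add: power_divide)
  finally have "2 * real (3 * a) ^ 2 / real (card X) \<le> 2 * (9 * real k / 2500) / real k"
    using assms(5,6) by (intro frac_le) auto
  also have "\<dots> = 18 / 2500" using assms(5) by simp
  finally show ?thesis using prob_distinct_take_sub_dist_ge[OF assms(1-4)] by simp
qed

lemma prob_distinct_take_small_support:
  assumes "finite X" "X \<noteq> {}" "D \<in> sub_dist (pmf_of_set X)" "3 * a \<le> n"
    and "real (card X) \<le> 1/100000000 * real k" "sqrt (real k) / 50 - 1 \<le> real a"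
  shows "measure_pmf.prob (iid_pmf n D) {S. distinct (take (3 * a) S)} \<le> 0.01"
proof -
  define s where "s = real (card X)"
  have s: "1 \<le> s" using assms(1,2) by (simp add: s_def Suc_le_eq card_gt_0_iff)
  have "100000000 \<le> real k" using assms(5) s by (simp add: s_def)
  then have "10000 \<le> sqrt (real k)" using real_sqrt_le_mono[of "10000\<^sup>2"] by simp
  then have a: "199 \<le> real a" "sqrt (real k) / 100 \<le> real a" using assms(6) by simp_all
  define d where "d = min (1/2) ((real a + 1) / s)"
  have d: "0 \<le> d" "d \<le> 1/2" "d * s \<le> real (Suc a)"
    using s by (auto simp: d_def min_def field_simps)
  have "99 \<le> real a * d"
  proof (cases "1/2 \<le> (real a + 1) / s")
    case True
    then show ?thesis using a by (simp add: d_def)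
  next
    case False
    have "(sqrt (real k) / 100)\<^sup>2 \<le> (real a)\<^sup>2" using a by (intro power_mono) auto
    then have "real k / 10000 \<le> (real a)\<^sup>2" by (simp add: power_divide)
    then have "(real k / 10000) / (real k / 100000000) \<le> (real a)\<^sup>2 / s"
      using assms(5) s by (intro frac_le) (auto simp: s_def)
    also have "\<dots> \<le> real a * d"
      using False s by (simp add: d_def power2_eq_square field_simps)
    finally show ?thesis using \<open>100000000 \<le> real k\<close> by simp
  qed
  then have "(1 - d) ^ a * 100 \<le> (1 - d) ^ a * (1 + real a * d)"
    using d by (intro mult_left_mono) auto
  also have "\<dots> \<le> 1" using d by (intro one_minus_power_mult_le_1) auto
  finally have "(1 - d) ^ a \<le> 0.01" by simp
  then show ?thesis
    using prob_distinct_take_sub_dist_le[OF assms(1-4) d(1,2)] d(3) by (simp add: s_def)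
qed

section \<open>Distinct elements of a uniform sample\<close>

lemma prob_member_iid_pmf_of_set_le:
  assumes "finite A" "A \<noteq> {}"
  shows "measure_pmf.prob (iid_pmf n (pmf_of_set A)) {xs. x \<in> set xs} \<le> real n / real (card A)"
proof (induction n)
  case (Suc n)
  let ?a = "real (card A)" and ?M = "iid_pmf n (pmf_of_set A)"
  have "0 < ?a" using assms by (simp add: card_gt_0_iff)
  have "measure_pmf.prob (iid_pmf (Suc n) (pmf_of_set A)) {xs. x \<in> set xs}
     = (\<Sum>y\<in>A. pmf (pmf_of_set A) y * measure_pmf.prob (map_pmf ((#) y) ?M) {xs. x \<in> set xs})"
    unfolding iid_pmf.simps using assms finite_set_pmf_iid_pmf_of_set[OF assms]
    by (intro measure_bind_pmf_finite) auto
  also have "\<dots> \<le> (\<Sum>y\<in>A. 1 / ?a * (of_bool (y = x) + real n / ?a))"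
  proof (intro sum_mono)
    fix y assume "y \<in> A"
    have "measure_pmf.prob (map_pmf ((#) y) ?M) {xs. x \<in> set xs} \<le> of_bool (y = x) + real n / ?a"
    proof (cases "y = x")
      case True
      then show ?thesis using \<open>0 < ?a\<close> measure_pmf.prob_le_1 by (simp add: add_increasing2)
    next
      case False
      then have "(#) y -` {xs. x \<in> set xs} = {xs. x \<in> set xs}" by auto
      then show ?thesis using Suc False by simp
    qed
    then show "pmf (pmf_of_set A) y * measure_pmf.prob (map_pmf ((#) y) ?M) {xs. x \<in> set xs}
        \<le> 1 / ?a * (of_bool (y = x) + real n / ?a)"
      using \<open>y \<in> A\<close> assms by (simp add: divide_right_mono)
  qed
  also have "\<dots> = (\<Sum>y\<in>A. of_bool (y = x)) / ?a + real n / ?a"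
    using \<open>0 < ?a\<close> by (simp add: sum.distrib sum_divide_distrib[symmetric] add_divide_distrib)
  also have "\<dots> \<le> real (Suc n) / ?a"
    using \<open>0 < ?a\<close> assms(1) card_mono[of "{x}" "A \<inter> {x}"]
    by (simp add: add_divide_distrib[symmetric] divide_right_mono)
  finally show ?case .
qed simp

definition num_repeats :: "'a list \<Rightarrow> real" where
  "num_repeats S = real (length S) - real (card (set S))"

lemma num_repeats_nonneg: "0 \<le> num_repeats S"
  unfolding num_repeats_def using card_length[of S] by simp

lemma num_repeats_Cons: "num_repeats (y # xs) = num_repeats xs + indicator {xs. y \<in> set xs} xs"
  unfolding num_repeats_def by (cases "y \<in> set xs") (auto simp: card_insert_if)

lemma expectation_num_repeats_le:
  assumes "finite A" "A \<noteq> {}"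
  shows "measure_pmf.expectation (iid_pmf n (pmf_of_set A)) num_repeats \<le> real n ^ 2 / real (card A)"
proof (induction n)
  case (Suc n)
  let ?a = "real (card A)" and ?M = "iid_pmf n (pmf_of_set A)"
  have "0 < ?a" using assms by (simp add: card_gt_0_iff)
  have int: "integrable (measure_pmf ?M) g" for g :: "'a list \<Rightarrow> real"
    by (rule integrable_measure_pmf_finite[OF finite_set_pmf_iid_pmf_of_set[OF assms]])
  have step: "measure_pmf.expectation (map_pmf ((#) y) ?M) num_repeats
      = measure_pmf.expectation ?M num_repeats + measure_pmf.prob ?M {xs. y \<in> set xs}" for y
    using Bochner_Integration.integral_add[OF int int] by (simp add: num_repeats_Cons)
  have "measure_pmf.expectation (iid_pmf (Suc n) (pmf_of_set A)) num_repeats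
     = (\<Sum>y\<in>A. pmf (pmf_of_set A) y *\<^sub>R measure_pmf.expectation (map_pmf ((#) y) ?M) num_repeats)"
    unfolding iid_pmf.simps using assms finite_set_pmf_iid_pmf_of_set[OF assms]
    by (intro pmf_expectation_bind) auto
  also have "\<dots> \<le> (\<Sum>y\<in>A. 1 / ?a * (real n ^ 2 / ?a + real n / ?a))"
  proof (intro sum_mono)
    fix y assume "y \<in> A"
    have "measure_pmf.expectation (map_pmf ((#) y) ?M) num_repeats \<le> real n ^ 2 / ?a + real n / ?a"
      using step[of y] Suc prob_member_iid_pmf_of_set_le[OF assms, of n y] by linarith
    then show "pmf (pmf_of_set A) y *\<^sub>R measure_pmf.expectation (map_pmf ((#) y) ?M) num_repeats
        \<le> 1 / ?a * (real n ^ 2 / ?a + real n / ?a)"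
      using \<open>y \<in> A\<close> assms by (simp add: divide_right_mono)
  qed
  also have "\<dots> = real n ^ 2 / ?a + real n / ?a" using \<open>0 < ?a\<close> by simp
  also have "\<dots> \<le> real (Suc n) ^ 2 / ?a" using \<open>0 < ?a\<close>
    by (simp add: add_divide_distrib[symmetric] divide_right_mono power2_eq_square algebra_simps)
  finally show ?case .
qed (simp add: num_repeats_def)

text \<open>Fewer than \<open>N\<close> distinct values among \<open>2 N\<close> draws means more than \<open>N\<close> repeats; apply Markov.\<close>

lemma prob_few_distinct_le:
  assumes "finite A" "A \<noteq> {}"
  shows "measure_pmf.prob (iid_pmf (2 * N) (pmf_of_set A)) {S. card (set S) < N}
       \<le> 4 * real N / real (card A)"
proof -
  let ?M = "iid_pmf (2 * N) (pmf_of_set A)" and ?a = "real (card A)"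
  have int: "integrable (measure_pmf ?M) g" for g :: "'a list \<Rightarrow> real"
    by (rule integrable_measure_pmf_finite[OF finite_set_pmf_iid_pmf_of_set[OF assms]])
  have "(real N + 1) * measure_pmf.prob ?M {S. card (set S) < N}
      = measure_pmf.expectation ?M (\<lambda>S. (real N + 1) * indicator {S. card (set S) < N} S)"
    by simp
  also have "\<dots> \<le> measure_pmf.expectation ?M num_repeats"
  proof (intro integral_mono_AE[OF int int] AE_pmfI)
    fix S assume "S \<in> set_pmf ?M"
    then have "length S = 2 * N" using set_pmf_iid_pmf by blast
    then show "(real N + 1) * indicator {S. card (set S) < N} S \<le> num_repeats S"
      using num_repeats_nonneg[of S] by (auto simp: indicator_def num_repeats_def)
  qed
  also have "\<dots> \<le> real (2 * N) ^ 2 / ?a" by (rule expectation_num_repeats_le[OF assms])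
  also have "\<dots> \<le> (real N + 1) * (4 * real N / ?a)"
    using assms by (simp add: power2_eq_square divide_right_mono field_simps)
  finally show ?thesis by (rule mult_left_le_imp_le) simp
qed

section \<open>Symmetrization against adaptive contamination\<close>

definition distinct_lists :: "nat \<Rightarrow> 'a set \<Rightarrow> 'a list set" where
  "distinct_lists N A = {t. length t = N \<and> distinct t \<and> set t \<subseteq> A}"

text \<open>The canonical adaptive adversary.\<close>

definition first_distinct :: "nat \<Rightarrow> 'a list \<Rightarrow> 'a list option" where
  "first_distinct N S = (if N \<le> card (set S) then Some (take N (remdups S)) else None)"

definition permutation_invariant :: "'a set \<Rightarrow> 'a list pmf \<Rightarrow> bool" where
  "permutation_invariant A \<mu> \<longleftrightarrow> (\<forall>\<pi>. \<pi> permutes A \<longrightarrow> map_pmf (map \<pi>) \<mu> = \<mu>)"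

lemma finite_distinct_lists: "finite A \<Longrightarrow> finite (distinct_lists N A)"
  unfolding distinct_lists_def
  by (rule finite_subset[OF _ finite_lists_length_eq[of A N]]) auto

lemma remdups_map_inj: "inj f \<Longrightarrow> remdups (map f xs) = map f (remdups xs)"
  by (induction xs) (auto simp: inj_image_mem_iff)

lemma first_distinct_map_inj:
  "inj \<pi> \<Longrightarrow> first_distinct N (map \<pi> S) = map_option (map \<pi>) (first_distinct N S)"
  unfolding first_distinct_def
  by (simp add: remdups_map_inj take_map card_image inj_on_subset[of \<pi> UNIV])

lemma first_distinct_in_distinct_lists:
  "set S \<subseteq> A \<Longrightarrow> first_distinct N S \<in> insert None (Some ` distinct_lists N A)"
  unfolding first_distinct_def distinct_lists_def using set_take_subset[of N "remdups S"]
  by (auto simp: length_remdups_card_conv)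

lemma first_distinct_eq_None_iff: "first_distinct N S = None \<longleftrightarrow> card (set S) < N"
  by (simp add: first_distinct_def)

lemma exists_permutes_map_eq:
  assumes "distinct t" "distinct t'" "length t = length t'" "set t \<subseteq> A" "set t' \<subseteq> A"
  shows "\<exists>\<pi>. \<pi> permutes A \<and> map \<pi> t = t'"
  using assms
proof (induction t arbitrary: t')
  case Nil
  then show ?case using permutes_id[of A] by (intro exI[of _ id]) (simp add: id_def)
next
  case (Cons x xs)
  then obtain y ys where t': "t' = y # ys" by (cases t') auto
  from Cons.IH[of ys] Cons.prems t' obtain \<sigma> where \<sigma>: "\<sigma> permutes A" "map \<sigma> xs = ys" by auto
  have "x \<in> A" "y \<in> A" using Cons.prems t' by auto
  have "\<sigma> x \<notin> set ys"
  proof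
    assume "\<sigma> x \<in> set ys"
    then obtain z where "z \<in> set xs" "\<sigma> z = \<sigma> x" using \<sigma>(2) by auto
    then show False
      using permutes_inj[OF \<sigma>(1)] Cons.prems(1) by (auto dest: injD)
  qed
  moreover have "y \<notin> set ys" using Cons.prems t' by auto
  ultimately have fixes_ys: "map (Transposition.transpose (\<sigma> x) y) ys = ys"
    by (intro map_idI) (auto intro: transpose_apply_other)
  define \<pi> where "\<pi> = Transposition.transpose (\<sigma> x) y \<circ> \<sigma>"
  have "\<pi> permutes A"
    unfolding \<pi>_def using \<open>x \<in> A\<close> \<open>y \<in> A\<close> permutes_in_image[OF \<sigma>(1)]
    by (intro permutes_compose \<sigma>(1) permutes_swap_id) auto
  moreover have "map \<pi> (x # xs) = t'"
    unfolding \<pi>_def t' using fixes_ys \<sigma>(2) by (simp add: map_map[symmetric])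
  ultimately show ?case by blast
qed

lemma pmf_first_distinct_constant:
  assumes "permutation_invariant A \<mu>"
  obtains q where "\<And>t. t \<in> distinct_lists N A \<Longrightarrow> pmf (map_pmf (first_distinct N) \<mu>) (Some t) = q"
proof (cases "distinct_lists N A = {}")
  case False
  then obtain t0 where t0: "t0 \<in> distinct_lists N A" by auto
  let ?\<nu> = "map_pmf (first_distinct N) \<mu>"
  have "pmf ?\<nu> (Some t) = pmf ?\<nu> (Some t0)" if t: "t \<in> distinct_lists N A" for t
  proof -
    obtain \<pi> where \<pi>: "\<pi> permutes A" "map \<pi> t0 = t"
      using exists_permutes_map_eq[of t0 t A] t t0 unfolding distinct_lists_def by auto
    have inj: "inj \<pi>" using permutes_inj[OF \<pi>(1)] .
    then have inj_map: "inj (map_option (map \<pi>))" by (intro option.inj_map inj_mapI) auto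
    have "?\<nu> = map_pmf (first_distinct N) (map_pmf (map \<pi>) \<mu>)"
      using assms \<pi>(1) by (simp add: permutation_invariant_def)
    also have "\<dots> = map_pmf (map_option (map \<pi>)) ?\<nu>"
      by (simp add: map_pmf_comp first_distinct_map_inj[OF inj])
    finally have "pmf ?\<nu> (Some t) = pmf (map_pmf (map_option (map \<pi>)) ?\<nu>) (map_option (map \<pi>) (Some t0))"
      using \<pi>(2) by simp
    also have "\<dots> = pmf ?\<nu> (Some t0)" by (rule pmf_map_inj'[OF inj_map])
    finally show ?thesis .
  qed
  then show ?thesis using that by blast
qed (use that in blast)

lemma take_remdups_in_sub_sample:
  assumes "length S = 2 * N" "N \<le> card (set S)"
  shows "take N (remdups S) \<in> sub_sample N S"
proof -
  define t where "t = take N (remdups S)"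
  define ix where "ix y = (SOME i. i < length S \<and> S ! i = y)" for y
  have tS: "set t \<subseteq> set S" unfolding t_def using set_take_subset[of N "remdups S"] by auto
  have ix: "ix y < length S \<and> S ! ix y = y" if "y \<in> set S" for y
    unfolding ix_def by (rule someI_ex) (use that in \<open>auto simp: in_set_conv_nth\<close>)
  have "inj_on ix (set t)"
    using ix tS by (intro inj_onI) (metis subsetD)
  moreover have "length t = N" "distinct t"
    unfolding t_def using assms(2) by (simp_all add: length_remdups_card_conv)
  moreover have "map (\<lambda>i. S ! i) (map ix t) = t"
    unfolding map_map by (rule map_idI) (use ix tS in auto)
  ultimately show ?thesis
    unfolding sub_sample_def t_def[symmetric] using ix tS assms(1)
    by (intro CollectI exI[of _ "map ix t"]) (auto simp: distinct_map)
qed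

lemma sub_sample_nonempty: "sub_sample N S \<noteq> {}"
proof -
  have "map (\<lambda>i. S ! i) [0..<N] \<in> sub_sample N S" unfolding sub_sample_def by force
  then show ?thesis by blast
qed

lemma Min_sub_sample_le_first_distinct:
  assumes "length S = 2 * N"
  shows "Min ((\<lambda>S'. if f S' then 1 else 0 :: real) ` sub_sample N S)
       \<le> (case first_distinct N S of None \<Rightarrow> 1 | Some t \<Rightarrow> of_bool (f t))"
proof -
  let ?V = "(\<lambda>S'. if f S' then 1 else 0 :: real) ` sub_sample N S"
  have "finite ?V" by (rule finite_subset[of _ "{0, 1}"]) auto
  have "?V \<noteq> {}" using sub_sample_nonempty by blast
  show ?thesis
  proof (cases "N \<le> card (set S)")
    case True
    then have "take N (remdups S) \<in> sub_sample N S" by (rule take_remdups_in_sub_sample[OF assms])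
    then have "Min ?V \<le> of_bool (f (take N (remdups S)))"
      using \<open>finite ?V\<close> by (intro Min_le) (auto simp: of_bool_def)
    then show ?thesis using True by (simp add: first_distinct_def)
  next
    case False
    have "Min ?V \<le> 1" using Min_in[OF \<open>finite ?V\<close> \<open>?V \<noteq> {}\<close>] by auto
    then show ?thesis using False by (simp add: first_distinct_def)
  qed
qed

lemma Max_sub_sample_ge_first_distinct:
  assumes "length S = 2 * N"
  shows "(case first_distinct N S of None \<Rightarrow> 0 | Some t \<Rightarrow> of_bool (f t))
       \<le> Max ((\<lambda>S'. if f S' then 1 else 0 :: real) ` sub_sample N S)"
proof -
  let ?V = "(\<lambda>S'. if f S' then 1 else 0 :: real) ` sub_sample N S"
  have "finite ?V" by (rule finite_subset[of _ "{0, 1}"]) auto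
  have "?V \<noteq> {}" using sub_sample_nonempty by blast
  show ?thesis
  proof (cases "N \<le> card (set S)")
    case True
    then have "take N (remdups S) \<in> sub_sample N S" by (rule take_remdups_in_sub_sample[OF assms])
    then have "Max ?V \<ge> of_bool (f (take N (remdups S)))"
      using \<open>finite ?V\<close> by (intro Max_ge) (auto simp: of_bool_def)
    then show ?thesis using True by (simp add: first_distinct_def)
  next
    case False
    have "Max ?V \<ge> 0" using Max_in[OF \<open>finite ?V\<close> \<open>?V \<noteq> {}\<close>] by auto
    then show ?thesis using False by (simp add: first_distinct_def)
  qed
qed

lemma expectation_first_distinct:
  fixes \<mu> :: "'a list pmf"
  assumes "finite A" "\<And>S. S \<in> set_pmf \<mu> \<Longrightarrow> set S \<subseteq> A"
    and q: "\<And>t. t \<in> distinct_lists N A \<Longrightarrow> pmf (map_pmf (first_distinct N) \<mu>) (Some t) = q"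
  shows "measure_pmf.expectation \<mu> (\<lambda>S. case first_distinct N S of None \<Rightarrow> v | Some t \<Rightarrow> of_bool (f t))
           = q * (\<Sum>t\<in>distinct_lists N A. of_bool (f t)) + v * pmf (map_pmf (first_distinct N) \<mu>) None"
    and "pmf (map_pmf (first_distinct N) \<mu>) None = 1 - real (card (distinct_lists N A)) * q"
proof -
  let ?\<nu> = "map_pmf (first_distinct N) \<mu>" and ?D = "distinct_lists N A"
  let ?B = "insert None (Some ` ?D)"
  have fin: "finite ?B" using finite_distinct_lists[OF assms(1)] by simp
  have supp: "set_pmf ?\<nu> \<subseteq> ?B"
    by (force dest: assms(2) first_distinct_in_distinct_lists[of _ A N])
  have sum_B: "(\<Sum>b\<in>?B. g b) = g None + (\<Sum>t\<in>?D. g (Some t))" for g :: "'a list option \<Rightarrow> real"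
    using finite_distinct_lists[OF assms(1)] by (simp add: sum.reindex)
  let ?\<phi> = "\<lambda>b. case b of None \<Rightarrow> v | Some t \<Rightarrow> of_bool (f t)"
  have "measure_pmf.expectation \<mu> (\<lambda>S. ?\<phi> (first_distinct N S)) = measure_pmf.expectation ?\<nu> ?\<phi>"
    by simp
  also have "\<dots> = (\<Sum>b\<in>?B. ?\<phi> b * pmf ?\<nu> b)"
    by (rule integral_measure_pmf_real[OF fin]) (use supp in auto)
  also have "\<dots> = q * (\<Sum>t\<in>?D. of_bool (f t)) + v * pmf ?\<nu> None"
    by (simp add: sum_B q sum_distrib_left mult.commute)
  finally show "measure_pmf.expectation \<mu> (\<lambda>S. ?\<phi> (first_distinct N S))
      = q * (\<Sum>t\<in>?D. of_bool (f t)) + v * pmf ?\<nu> None" .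
  have "1 = (\<Sum>b\<in>?B. pmf ?\<nu> b)" by (rule sum_pmf_eq_1[OF fin supp, symmetric])
  then show "pmf ?\<nu> None = 1 - real (card ?D) * q" by (simp add: sum_B q)
qed

lemma finite_set_pmf_of_lists:
  assumes "finite A" "\<And>S. S \<in> set_pmf \<mu> \<Longrightarrow> set S \<subseteq> A \<and> length S = n"
  shows "finite (set_pmf \<mu>)"
  using assms(2) by (intro finite_subset[OF _ finite_lists_length_eq[OF assms(1), of n]]) auto

lemma pmf_first_distinct_None:
  "pmf (map_pmf (first_distinct N) \<mu>) None = measure_pmf.prob \<mu> {S. card (set S) < N}"
  by (simp add: pmf_map vimage_def first_distinct_eq_None_iff)

lemma expectation_Min_sub_sample_le:
  assumes "finite A" "permutation_invariant A \<mu>"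
    and supp: "\<And>S. S \<in> set_pmf \<mu> \<Longrightarrow> set S \<subseteq> A \<and> length S = 2 * N"
  obtains q where
    "measure_pmf.expectation \<mu> (\<lambda>S. Min ((\<lambda>S'. if f S' then 1 else 0 :: real) ` sub_sample N S))
       \<le> q * (\<Sum>t\<in>distinct_lists N A. of_bool (f t)) + measure_pmf.prob \<mu> {S. card (set S) < N}"
    "measure_pmf.prob \<mu> {S. card (set S) < N} = 1 - real (card (distinct_lists N A)) * q"
proof -
  obtain q where q: "\<And>t. t \<in> distinct_lists N A \<Longrightarrow> pmf (map_pmf (first_distinct N) \<mu>) (Some t) = q"
    using pmf_first_distinct_constant[OF assms(2)] by blast
  note E = expectation_first_distinct(1)[OF assms(1) _ q, where v = 1 and f = f]
    expectation_first_distinct(2)[OF assms(1) _ q]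
  have int: "integrable (measure_pmf \<mu>) g" for g :: "'a list \<Rightarrow> real"
    by (rule integrable_measure_pmf_finite[OF finite_set_pmf_of_lists[OF assms(1) supp]])
  have "measure_pmf.expectation \<mu> (\<lambda>S. Min ((\<lambda>S'. if f S' then 1 else 0 :: real) ` sub_sample N S))
      \<le> measure_pmf.expectation \<mu> (\<lambda>S. case first_distinct N S of None \<Rightarrow> 1 | Some t \<Rightarrow> of_bool (f t))"
    by (intro integral_mono_AE[OF int int] AE_pmfI Min_sub_sample_le_first_distinct) (use supp in blast)
  with E supp that show ?thesis by (simp add: pmf_first_distinct_None)
qed

lemma expectation_Max_sub_sample_ge:
  assumes "finite A" "permutation_invariant A \<mu>"
    and supp: "\<And>S. S \<in> set_pmf \<mu> \<Longrightarrow> set S \<subseteq> A \<and> length S = 2 * N"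
  obtains q where
    "q * (\<Sum>t\<in>distinct_lists N A. of_bool (f t))
       \<le> measure_pmf.expectation \<mu> (\<lambda>S. Max ((\<lambda>S'. if f S' then 1 else 0 :: real) ` sub_sample N S))"
    "measure_pmf.prob \<mu> {S. card (set S) < N} = 1 - real (card (distinct_lists N A)) * q"
proof -
  obtain q where q: "\<And>t. t \<in> distinct_lists N A \<Longrightarrow> pmf (map_pmf (first_distinct N) \<mu>) (Some t) = q"
    using pmf_first_distinct_constant[OF assms(2)] by blast
  note E = expectation_first_distinct(1)[OF assms(1) _ q, where v = 0 and f = f]
    expectation_first_distinct(2)[OF assms(1) _ q]
  have int: "integrable (measure_pmf \<mu>) g" for g :: "'a list \<Rightarrow> real"
    by (rule integrable_measure_pmf_finite[OF finite_set_pmf_of_lists[OF assms(1) supp]])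
  have "measure_pmf.expectation \<mu> (\<lambda>S. case first_distinct N S of None \<Rightarrow> 0 | Some t \<Rightarrow> of_bool (f t))
      \<le> measure_pmf.expectation \<mu> (\<lambda>S. Max ((\<lambda>S'. if f S' then 1 else 0 :: real) ` sub_sample N S))"
    by (intro integral_mono_AE[OF int int] AE_pmfI Max_sub_sample_ge_first_distinct) (use supp in blast)
  with E supp that show ?thesis by (simp add: pmf_first_distinct_None)
qed

lemma acceptance_transfer:
  fixes K F q q' :: real
  assumes "0 \<le> K" "0 \<le> F" "K * q \<le> 1" "0.99 \<le> K * q'" "0.5 < q * F"
  shows "0.49 \<le> q' * F"
proof -
  have "0 < K" using assms(1,4) by (cases "K = 0") auto
  moreover have "K * (0.99 * q) \<le> K * q'" using assms(3,4) by (simp add: algebra_simps)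
  ultimately have "0.99 * q \<le> q'" by (simp add: mult_le_cancel_left_pos)
  then have "0.99 * (q * F) \<le> q' * F"
    using mult_right_mono[OF _ assms(2)] by (metis mult.assoc)
  then show ?thesis using assms(5) by simp
qed

text \<open>If both laws rarely have fewer than \<open>N\<close> distinct values, the adversary's choices
  \<^const>\<open>first_distinct\<close> are close to uniform on distinct lists under both, so the two expectations
  are governed by the same fraction of distinct lists accepted by \<open>f\<close>.\<close>

lemma permutation_invariant_adaptive_indistinguishable:
  assumes "finite A" "permutation_invariant A \<mu>" "permutation_invariant A \<nu>"
    and "\<And>S. S \<in> set_pmf \<mu> \<Longrightarrow> set S \<subseteq> A \<and> length S = 2 * N"
    and "\<And>S. S \<in> set_pmf \<nu> \<Longrightarrow> set S \<subseteq> A \<and> length S = 2 * N"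
    and few_\<mu>: "measure_pmf.prob \<mu> {S. card (set S) < N} \<le> 0.01"
    and few_\<nu>: "measure_pmf.prob \<nu> {S. card (set S) < N} \<le> 0.01"
  shows "measure_pmf.expectation \<mu> (\<lambda>S. Min ((\<lambda>S'. if f S' then 1 else 0 :: real) ` sub_sample N S)) \<le> 0.51
       \<or> 0.49 \<le> measure_pmf.expectation \<nu> (\<lambda>S. Max ((\<lambda>S'. if f S' then 1 else 0 :: real) ` sub_sample N S))"
proof -
  let ?F = "\<Sum>t\<in>distinct_lists N A. of_bool (f t) :: real"
  let ?K = "real (card (distinct_lists N A))"
  obtain q\<^sub>\<mu> where E\<^sub>\<mu>:
    "measure_pmf.expectation \<mu> (\<lambda>S. Min ((\<lambda>S'. if f S' then 1 else 0 :: real) ` sub_sample N S))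
       \<le> q\<^sub>\<mu> * ?F + measure_pmf.prob \<mu> {S. card (set S) < N}"
    and K\<^sub>\<mu>: "measure_pmf.prob \<mu> {S. card (set S) < N} = 1 - ?K * q\<^sub>\<mu>"
    by (rule expectation_Min_sub_sample_le[OF assms(1,2,4)])
  obtain q\<^sub>\<nu> where E\<^sub>\<nu>:
    "q\<^sub>\<nu> * ?F \<le> measure_pmf.expectation \<nu> (\<lambda>S. Max ((\<lambda>S'. if f S' then 1 else 0 :: real) ` sub_sample N S))"
    and K\<^sub>\<nu>: "measure_pmf.prob \<nu> {S. card (set S) < N} = 1 - ?K * q\<^sub>\<nu>"
    by (rule expectation_Max_sub_sample_ge[OF assms(1,3,5)])
  have "?K * q\<^sub>\<mu> \<le> 1" using K\<^sub>\<mu> measure_nonneg[of \<mu> "{S. card (set S) < N}"] by linarith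
  moreover have "0.99 \<le> ?K * q\<^sub>\<nu>" using K\<^sub>\<nu> few_\<nu> by simp
  ultimately have "0.5 < q\<^sub>\<mu> * ?F \<Longrightarrow> 0.49 \<le> q\<^sub>\<nu> * ?F"
    by (intro acceptance_transfer) (simp_all add: sum_nonneg)
  then show ?thesis using E\<^sub>\<mu> E\<^sub>\<nu> few_\<mu> unfolding power2_eq_square by linarith
qed

section \<open>Samples from a random subset\<close>

definition random_subset_sample :: "'a set \<Rightarrow> nat \<Rightarrow> nat \<Rightarrow> 'a list pmf" where
  "random_subset_sample A s n = pmf_of_set {X. X \<subseteq> A \<and> card X = s} \<bind> (\<lambda>X. iid_pmf n (pmf_of_set X))"

context
  fixes A :: "'a set" and s :: nat
  assumes finite_A: "finite A" and s_pos: "1 \<le> s" and s_le: "s \<le> card A"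
begin

lemma finite_subsets_card: "finite {X. X \<subseteq> A \<and> card X = s}"
  by (rule finite_subset[of _ "Pow A"]) (use finite_A in auto)

lemma subsets_card_nonempty: "{X. X \<subseteq> A \<and> card X = s} \<noteq> {}"
  using obtain_subset_with_card_n[OF s_le] by blast

lemma subsets_card_memberD:
  assumes "X \<in> {X. X \<subseteq> A \<and> card X = s}"
  shows "finite X" "X \<noteq> {}"
proof -
  have "X \<subseteq> A" "card X = s" using assms by simp_all
  then show "finite X" "X \<noteq> {}"
    using finite_subset[OF _ finite_A] s_pos by auto
qed

lemma set_pmf_random_subset_sample:
  assumes "S \<in> set_pmf (random_subset_sample A s n)"
  shows "set S \<subseteq> A \<and> length S = n"
proof -
  obtain X where X: "X \<in> {X. X \<subseteq> A \<and> card X = s}" "S \<in> set_pmf (iid_pmf n (pmf_of_set X))"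
    using assms finite_subsets_card subsets_card_nonempty
    unfolding random_subset_sample_def set_bind_pmf by auto
  then have "set S \<subseteq> set_pmf (pmf_of_set X)" "length S = n"
    using set_pmf_iid_pmf by blast+
  then show ?thesis using X subsets_card_memberD[OF X(1)] by auto
qed

lemma permutation_invariant_random_subset_sample:
  "permutation_invariant A (random_subset_sample A s n)"
  unfolding permutation_invariant_def
proof (intro allI impI)
  fix \<pi> assume \<pi>: "\<pi> permutes A"
  let ?F = "{X. X \<subseteq> A \<and> card X = s}"
  have inj: "inj \<pi>" by (rule permutes_inj[OF \<pi>])
  have inj_image: "inj_on (image \<pi>) Y" for Y
    using inj by (auto simp: inj_on_def inj_image_eq_iff)
  have image_F: "image \<pi> ` ?F = ?F"
  proof (rule card_subset_eq[OF finite_subsets_card])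
    show "image \<pi> ` ?F \<subseteq> ?F"
    proof
      fix Y assume "Y \<in> image \<pi> ` ?F"
      then obtain X where X: "X \<subseteq> A" "card X = s" "Y = \<pi> ` X" by auto
      have "\<pi> ` X \<subseteq> A" using X(1) permutes_image[OF \<pi>] by blast
      moreover have "card (\<pi> ` X) = card X" by (rule card_image[OF inj_on_subset[OF inj subset_UNIV]])
      ultimately show "Y \<in> ?F" using X by simp
    qed
    show "card (image \<pi> ` ?F) = card ?F" by (rule card_image[OF inj_image])
  qed
  have "map_pmf (map \<pi>) (random_subset_sample A s n)
      = pmf_of_set ?F \<bind> (\<lambda>X. iid_pmf n (pmf_of_set (\<pi> ` X)))"
    unfolding random_subset_sample_def map_bind_pmf
  proof (rule bind_pmf_cong[OF refl])
    fix X assume "X \<in> set_pmf (pmf_of_set ?F)"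
    then have X: "X \<in> ?F" using finite_subsets_card subsets_card_nonempty by simp
    have "map_pmf \<pi> (pmf_of_set X) = pmf_of_set (\<pi> ` X)"
      by (rule map_pmf_of_set_inj[OF inj_on_subset[OF inj subset_UNIV] subsets_card_memberD(2,1)[OF X]])
    then show "map_pmf (map \<pi>) (iid_pmf n (pmf_of_set X)) = iid_pmf n (pmf_of_set (\<pi> ` X))"
      by (simp add: map_pmf_map_iid_pmf)
  qed
  also have "\<dots> = map_pmf (image \<pi>) (pmf_of_set ?F) \<bind> (\<lambda>Y. iid_pmf n (pmf_of_set Y))"
    by (simp add: bind_map_pmf)
  also have "map_pmf (image \<pi>) (pmf_of_set ?F) = pmf_of_set ?F"
    using map_pmf_of_set_inj[OF inj_image subsets_card_nonempty finite_subsets_card] image_F by simp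
  finally show "map_pmf (map \<pi>) (random_subset_sample A s n) = random_subset_sample A s n"
    unfolding random_subset_sample_def .
qed

lemma expectation_random_subset_sample:
  fixes g :: "'a list \<Rightarrow> real"
  shows "measure_pmf.expectation (random_subset_sample A s n) g
       = (\<Sum>X\<in>{X. X \<subseteq> A \<and> card X = s}. measure_pmf.expectation (iid_pmf n (pmf_of_set X)) g)
         / real (card {X. X \<subseteq> A \<and> card X = s})"
proof -
  have "finite (set_pmf (iid_pmf n (pmf_of_set X)))" if "X \<in> {X. X \<subseteq> A \<and> card X = s}" for X
    using finite_set_pmf_iid_pmf_of_set subsets_card_memberD[OF that] by blast
  then have "measure_pmf.expectation (random_subset_sample A s n) g
      = (\<Sum>X\<in>{X. X \<subseteq> A \<and> card X = s}. measure_pmf.expectation (iid_pmf n (pmf_of_set X)) g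
           /\<^sub>R real (card {X. X \<subseteq> A \<and> card X = s}))"
    unfolding random_subset_sample_def
    by (rule pmf_expectation_bind_pmf_of_set[OF subsets_card_nonempty finite_subsets_card])
  then show ?thesis by (simp add: divide_inverse_commute sum_distrib_left)
qed

lemma prob_few_distinct_random_subset_sample_le:
  "measure_pmf.prob (random_subset_sample A s (2 * N)) {S. card (set S) < N} \<le> 4 * real N / real s"
proof -
  let ?F = "{X. X \<subseteq> A \<and> card X = s}"
  have fin: "finite (set_pmf (iid_pmf (2 * N) (pmf_of_set X)))" if "X \<in> ?F" for X
    using finite_set_pmf_iid_pmf_of_set subsets_card_memberD[OF that] by blast
  have "measure_pmf.prob (random_subset_sample A s (2 * N)) {S. card (set S) < N}
      = (\<Sum>X\<in>?F. pmf (pmf_of_set ?F) X * measure_pmf.prob (iid_pmf (2 * N) (pmf_of_set X)) {S. card (set S) < N})"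
    unfolding random_subset_sample_def
    by (rule measure_bind_pmf_finite[OF finite_subsets_card _ fin])
       (simp_all add: set_pmf_of_set[OF subsets_card_nonempty finite_subsets_card])
  also have "\<dots> \<le> (\<Sum>X\<in>?F. pmf (pmf_of_set ?F) X * (4 * real N / real s))"
  proof (intro sum_mono mult_left_mono)
    fix X assume X: "X \<in> ?F"
    then show "measure_pmf.prob (iid_pmf (2 * N) (pmf_of_set X)) {S. card (set S) < N} \<le> 4 * real N / real s"
      using prob_few_distinct_le[OF subsets_card_memberD[OF X]] by simp
  qed simp
  also have "\<dots> = (\<Sum>X\<in>?F. pmf (pmf_of_set ?F) X) * (4 * real N / real s)"
    by (rule sum_distrib_right[symmetric])
  also have "(\<Sum>X\<in>?F. pmf (pmf_of_set ?F) X) = 1"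
    by (rule sum_pmf_eq_1[OF finite_subsets_card])
       (simp add: set_pmf_of_set[OF subsets_card_nonempty finite_subsets_card])
  finally show ?thesis by simp
qed

end

section \<open>The two regimes\<close>

lemma exists_ge_average:
  fixes g :: "'a \<Rightarrow> real"
  assumes "finite I" "I \<noteq> {}" "c \<le> (\<Sum>i\<in>I. g i) / real (card I)"
  shows "\<exists>i\<in>I. c \<le> g i"
proof (rule ccontr)
  assume "\<not> ?thesis"
  then have "(\<Sum>i\<in>I. g i) < (\<Sum>i\<in>I. c)"
    using assms(1,2) by (intro sum_strict_mono) auto
  then show False
    using assms by (simp add: le_divide_eq card_gt_0_iff mult.commute)
qed

lemma adaptive_contamination_confuses_uniform_and_subset:
  fixes A :: "'a set" and f :: "'a list \<Rightarrow> bool"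
  assumes A: "finite A" "1 \<le> s" "s \<le> card A"
    and sizes: "4 * real N / real (card A) \<le> 0.01" "4 * real N / real s \<le> 0.01"
  defines "min_acc \<equiv> \<lambda>S. Min ((\<lambda>S'. if f S' then 1 else 0 :: real) ` sub_sample N S)"
    and "max_acc \<equiv> \<lambda>S. Max ((\<lambda>S'. if f S' then 1 else 0 :: real) ` sub_sample N S)"
  shows "measure_pmf.expectation (iid_pmf (2 * N) (pmf_of_set A)) min_acc \<le> 0.51
       \<or> (\<exists>X. X \<subseteq> A \<and> card X = s \<and> 0.49 \<le> measure_pmf.expectation (iid_pmf (2 * N) (pmf_of_set X)) max_acc)"
proof -
  define \<mu> where "\<mu> = iid_pmf (2 * N) (pmf_of_set A)"
  define \<nu> where "\<nu> = random_subset_sample A s (2 * N)"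
  let ?F = "{X. X \<subseteq> A \<and> card X = s}"
  have "A \<noteq> {}" using A by auto
  have inv_\<mu>: "permutation_invariant A \<mu>"
    unfolding \<mu>_def permutation_invariant_def using A \<open>A \<noteq> {}\<close>
    by (simp add: map_pmf_iid_pmf_of_set_permutes)
  have supp_\<mu>: "set S \<subseteq> A \<and> length S = 2 * N" if "S \<in> set_pmf \<mu>" for S
    using that set_pmf_iid_pmf[of "2 * N" "pmf_of_set A"] A \<open>A \<noteq> {}\<close> unfolding \<mu>_def by auto
  have few_\<mu>: "measure_pmf.prob \<mu> {S. card (set S) < N} \<le> 0.01"
    unfolding \<mu>_def using prob_few_distinct_le[OF A(1) \<open>A \<noteq> {}\<close>] sizes(1) by (rule order_trans)
  have inv_\<nu>: "permutation_invariant A \<nu>"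
    unfolding \<nu>_def by (rule permutation_invariant_random_subset_sample[OF A])
  have supp_\<nu>: "set S \<subseteq> A \<and> length S = 2 * N" if "S \<in> set_pmf \<nu>" for S
    using that unfolding \<nu>_def by (rule set_pmf_random_subset_sample[OF A])
  have few_\<nu>: "measure_pmf.prob \<nu> {S. card (set S) < N} \<le> 0.01"
    unfolding \<nu>_def using prob_few_distinct_random_subset_sample_le[OF A] sizes(2) by (rule order_trans)
  have "measure_pmf.expectation \<mu> min_acc \<le> 0.51 \<or> 0.49 \<le> measure_pmf.expectation \<nu> max_acc"
    unfolding min_acc_def max_acc_def
    by (rule permutation_invariant_adaptive_indistinguishable[OF A(1) inv_\<mu> inv_\<nu> supp_\<mu> supp_\<nu> few_\<mu> few_\<nu>])
  moreover have "\<exists>X\<in>?F. 0.49 \<le> measure_pmf.expectation (iid_pmf (2 * N) (pmf_of_set X)) max_acc"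
    if "0.49 \<le> measure_pmf.expectation \<nu> max_acc"
    using that unfolding \<nu>_def expectation_random_subset_sample[OF A]
    by (rule exists_ge_average[OF finite_subsets_card[OF A] subsets_card_nonempty[OF A]])
  ultimately show ?thesis unfolding \<mu>_def by blast
qed

lemma adaptive_contamination_hides_support_size:
  fixes m :: nat and f :: "nat list \<Rightarrow> bool"
  assumes m: "200000000 \<le> m"
  defines "N \<equiv> nat \<lfloor>1/100000000000 * real m\<rfloor>"
  shows "(\<exists>X'. X' \<subseteq> {1..m} \<and> card X' = m \<and>
             measure_pmf.expectation (iid_pmf (2*N) (pmf_of_set X'))
               (\<lambda>S. Min ((\<lambda>S'. if f S' then 1 else 0 :: real) ` sub_sample N S)) \<le> 0.51)
       \<or> (\<exists>X'. X' \<subseteq> {1..m} \<and> X' \<noteq> {} \<and> real (card X') \<le> 1/100000000 * real m \<and>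
             measure_pmf.expectation (iid_pmf (2*N) (pmf_of_set X'))
               (\<lambda>S. Max ((\<lambda>S'. if f S' then 1 else 0 :: real) ` sub_sample N S)) \<ge> 0.49)"
proof -
  define s where "s = nat \<lfloor>1/100000000 * real m\<rfloor>"
  have "real N = of_int \<lfloor>1/100000000000 * real m\<rfloor>" unfolding N_def by simp
  then have N: "real N \<le> 1/100000000000 * real m" by linarith
  have "real s = of_int \<lfloor>1/100000000 * real m\<rfloor>" unfolding s_def by simp
  then have s: "real s \<le> 1/100000000 * real m" "1/100000000 * real m - 1 \<le> real s"
    using floor_correct[of "1/100000000 * real m"] by linarith+
  then have "1 \<le> s" "s \<le> card {1..m}" using m by simp_all
  moreover have "4 * real N / real (card {1..m}) \<le> 0.01" "4 * real N / real s \<le> 0.01"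
    using N s m \<open>1 \<le> s\<close> by (simp_all add: divide_le_eq)
  ultimately have "measure_pmf.expectation (iid_pmf (2 * N) (pmf_of_set {1..m}))
        (\<lambda>S. Min ((\<lambda>S'. if f S' then 1 else 0 :: real) ` sub_sample N S)) \<le> 0.51
    \<or> (\<exists>X. X \<subseteq> {1..m} \<and> card X = s \<and> 0.49 \<le> measure_pmf.expectation (iid_pmf (2 * N) (pmf_of_set X))
        (\<lambda>S. Max ((\<lambda>S'. if f S' then 1 else 0 :: real) ` sub_sample N S)))"
    by (intro adaptive_contamination_confuses_uniform_and_subset finite_atLeastAtMost)
  then show ?thesis
  proof (elim disjE exE conjE)
    fix X assume "X \<subseteq> {1..m}" "card X = s"
      "0.49 \<le> measure_pmf.expectation (iid_pmf (2 * N) (pmf_of_set X))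
        (\<lambda>S. Max ((\<lambda>S'. if f S' then 1 else 0 :: real) ` sub_sample N S))"
    then show ?thesis using s(1) \<open>1 \<le> s\<close> by (intro disjI2 exI[of _ X]) auto
  qed (intro disjI1 exI[of _ "{1..m}"], simp)
qed

lemma oblivious_contamination_support_tester:
  fixes m k :: nat
  assumes "1 \<le> k" "k \<le> m"
  shows "\<exists>f :: nat list \<Rightarrow> bool. \<forall>X'. X' \<subseteq> {1..m} \<and> X' \<noteq> {} \<longrightarrow>
           (real (card X') \<ge> real k \<longrightarrow>
              (\<forall>D' \<in> sub_dist (pmf_of_set X'). measure_pmf.prob (iid_pmf (nat \<lceil>1 * sqrt (real m)\<rceil>) D') {S. f S} \<ge> 0.99)) \<and>
           (real (card X') \<le> 1/100000000 * real k \<longrightarrow>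
              (\<forall>D' \<in> sub_dist (pmf_of_set X'). measure_pmf.prob (iid_pmf (nat \<lceil>1 * sqrt (real m)\<rceil>) D') {S. f S} \<le> 0.01))"
proof -
  define a where "a = nat \<lfloor>sqrt (real k) / 50\<rfloor>"
  have "real a = of_int \<lfloor>sqrt (real k) / 50\<rfloor>" unfolding a_def by simp
  then have a: "real a \<le> sqrt (real k) / 50" "sqrt (real k) / 50 - 1 \<le> real a"
    using floor_correct[of "sqrt (real k) / 50"] by linarith+
  have "sqrt (real k) \<le> sqrt (real m)" using assms(2) by simp
  then have "3 * real a \<le> sqrt (real m)" using a(1) by linarith
  then have n: "3 * a \<le> nat \<lceil>1 * sqrt (real m)\<rceil>" by linarith
  show ?thesis
  proof (intro exI[of _ "\<lambda>S. distinct (take (3 * a) S)"] allI impI conjI ballI)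
    fix X' :: "nat set" and D' assume X': "X' \<subseteq> {1..m} \<and> X' \<noteq> {}"
      and D': "D' \<in> sub_dist (pmf_of_set X')"
    then have "finite X'" using finite_subset by blast
    note X'_facts = this conjunct2[OF X'] D' n
    show "0.99 \<le> measure_pmf.prob (iid_pmf (nat \<lceil>1 * sqrt (real m)\<rceil>) D') {S. distinct (take (3 * a) S)}"
      if "real k \<le> real (card X')"
      using prob_distinct_take_large_support[OF X'_facts assms(1) that a(1)] .
    show "measure_pmf.prob (iid_pmf (nat \<lceil>1 * sqrt (real m)\<rceil>) D') {S. distinct (take (3 * a) S)} \<le> 0.01"
      if "real (card X') \<le> 1/100000000 * real k"
      using prob_distinct_take_small_support[OF X'_facts that a(2)] .
  qed
qed

theorem mainTheorem15:
  shows "\<exists>(c::real) (C::real) (c'::real) (m0::nat).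
    0 < c \<and> c < 1 \<and> 0 < C \<and> 0 < c' \<and>
    (\<forall>m::nat. m \<ge> m0 \<longrightarrow>
      (let n_small = nat \<lceil>C * sqrt (real m)\<rceil> in
        \<forall>k::nat. 1 \<le> k \<and> k \<le> m \<longrightarrow>
          (\<exists>f :: nat list \<Rightarrow> bool.
             \<forall>X'. X' \<subseteq> {1..m} \<and> X' \<noteq> {} \<longrightarrow>
               (real (card X') \<ge> real k \<longrightarrow>
                  (\<forall>D' \<in> sub_dist (pmf_of_set X').
                     measure_pmf.prob (iid_pmf n_small D') {S. f S} \<ge> 0.99)) \<and>
               (real (card X') \<le> c * real k \<longrightarrow>
                  (\<forall>D' \<in> sub_dist (pmf_of_set X').
                     measure_pmf.prob (iid_pmf n_small D') {S. f S} \<le> 0.01))))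
      \<and>
      (let N = nat \<lfloor>c' * real m\<rfloor> in
        \<forall>f :: nat list \<Rightarrow> bool.
          (\<exists>X'. X' \<subseteq> {1..m} \<and> card X' = m \<and>
             measure_pmf.expectation (iid_pmf (2*N) (pmf_of_set X'))
               (\<lambda>S. Min ((\<lambda>S'. if f S' then 1 else 0 :: real) ` sub_sample N S)) \<le> 0.51)
          \<or>
          (\<exists>X'. X' \<subseteq> {1..m} \<and> X' \<noteq> {} \<and> real (card X') \<le> c * real m \<and>
             measure_pmf.expectation (iid_pmf (2*N) (pmf_of_set X'))
               (\<lambda>S. Max ((\<lambda>S'. if f S' then 1 else 0 :: real) ` sub_sample N S)) \<ge> 0.49)))"
  unfolding Let_def
proof (rule exI[of _ "1/100000000"], rule exI[of _ 1], rule exI[of _ "1/100000000000"],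
    rule exI[of _ 200000000], intro conjI allI impI)
qed ((rule oblivious_contamination_support_tester; simp)
      | (rule adaptive_contamination_hides_support_size; assumption) | simp)+

end
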